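(* Let $\mathcal{X},\mathcal{Y}$ be disjoint finite sets of Boolean variables, $alive\notin\mathcal{X}\cup\mathcal{Y}$ a fresh variable, $\alpha$ a Boolean formula over $\mathcal{X}$, $\phi$ an LTLf formula over $\mathcal{X}\cup\mathcal{Y}$, and $\psi=t(\phi)\wedge alive\wedge(alive\ U\ (G\neg alive))$. Then $\phi$ is $\alpha$-fair realizable if and only if the LTL formula $GF\alpha\rightarrow\psi$ is realizable with respect to $\langle\mathcal{X},\mathcal{Y}\cup\{alive\}\rangle$.
   Context: LTLf formulas: $\phi ::= a \mid \neg\phi \mid \phi_1\wedge\phi_2 \mid X\phi \mid \phi_1 U\phi_2$ with the finite-trace semantics: $\rho,i\models X\phi$ iff $i+1<|\rho|$ and $\rho,i+1\models\phi$; $\rho,i\models\phi_1U\phi_2$ iff there is $j$ with $i\le j<|\rho|$, $\rho,j\models\phi_2$ and $\rho,k\models\phi_1$ for $i\le k<j$; atoms and Boolean connectives as usual; $\rho\models\phi$ iff $\rho,0\models\phi$. LTL: same syntax plus $F,G$, standard semantics over infinite traces. Translation $t$: $t(a)=a$; $t(\neg\phi_1)=\neg t(\phi_1)$; $t(\phi_1\wedge\phi_2)=t(\phi_1)\wedge t(\phi_2)$; $t(X\phi)=X(alive\wedge t(\phi))$; $t(\phi_1U\phi_2)=t(\phi_1)\,U\,(alive\wedge t(\phi_2))$. $\alpha$-fair realizability: $\phi$ is $\alpha$-fair realizable if there is $g:(2^{\mathcal{X}})^+\to 2^{\mathcal{Y}}$ such that for every $\lambda=X_0,X_1,\ldots\in(2^{\mathcal{X}})^\omega$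 with $X_j\models\alpha$ for infinitely many $j$, there is $k\ge0$ with $\phi$ true in $(X_0\cup g(X_0)),\ldots,(X_k\cup g(X_0,\ldots,X_k))$. LTL realizability: an LTL formula $\Psi$ over $\mathcal{X}\cup\mathcal{Y}'$ ($\mathcal{X},\mathcal{Y}'$ disjoint) is realizable with respect to $\langle\mathcal{X},\mathcal{Y}'\rangle$ if there is $f:(2^{\mathcal{X}})^+\to 2^{\mathcal{Y}'}$ such that for every $\lambda=X_0,X_1,\ldots\in(2^{\mathcal{X}})^\omega$, $\Psi$ holds on the infinite trace $(X_0\cup f(X_0)),(X_1\cup f(X_0,X_1)),(X_2\cup f(X_0,X_1,X_2)),\ldots$. *)

theory Defs
  imports Main
begin

datatype 'a bform = BTrue | BAtom 'a | BNot "'a bform" | BAnd "'a bform" "'a bform"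

fun bsat :: "'a set \<Rightarrow> 'a bform \<Rightarrow> bool" where
  "bsat s BTrue = True"
| "bsat s (BAtom a) = (a \<in> s)"
| "bsat s (BNot b) = (\<not> bsat s b)"
| "bsat s (BAnd b1 b2) = (bsat s b1 \<and> bsat s b2)"

fun batoms :: "'a bform \<Rightarrow> 'a set" where
  "batoms BTrue = {}"
| "batoms (BAtom a) = {a}"
| "batoms (BNot b) = batoms b"
| "batoms (BAnd b1 b2) = batoms b1 \<union> batoms b2"

datatype 'a ltlf = FAtom 'a | FNot "'a ltlf" | FAnd "'a ltlf" "'a ltlf"
  | FNext "'a ltlf" | FUntil "'a ltlf" "'a ltlf"

fun ltlf_sat :: "'a set list \<Rightarrow> nat \<Rightarrow> 'a ltlf \<Rightarrow> bool" where
  "ltlf_sat \<rho> i (FAtom a) = (a \<in> \<rho> ! i)"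
| "ltlf_sat \<rho> i (FNot p) = (\<not> ltlf_sat \<rho> i p)"
| "ltlf_sat \<rho> i (FAnd p q) = (ltlf_sat \<rho> i p \<and> ltlf_sat \<rho> i q)"
| "ltlf_sat \<rho> i (FNext p) = (i + 1 < length \<rho> \<and> ltlf_sat \<rho> (i + 1) p)"
| "ltlf_sat \<rho> i (FUntil p q) =
     (\<exists>j. i \<le> j \<and> j < length \<rho> \<and> ltlf_sat \<rho> j q \<and> (\<forall>k. i \<le> k \<and> k < j \<longrightarrow> ltlf_sat \<rho> k p))"

definition ltlf_models :: "'a set list \<Rightarrow> 'a ltlf \<Rightarrow> bool" where
  "ltlf_models \<rho> p = ltlf_sat \<rho> 0 p"

fun fatoms :: "'a ltlf \<Rightarrow> 'a set" where
  "fatoms (FAtom a) = {a}"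
| "fatoms (FNot p) = fatoms p"
| "fatoms (FAnd p q) = fatoms p \<union> fatoms q"
| "fatoms (FNext p) = fatoms p"
| "fatoms (FUntil p q) = fatoms p \<union> fatoms q"

datatype 'a ltl = LTrue | LAtom 'a | LNot "'a ltl" | LAnd "'a ltl" "'a ltl"
  | LNext "'a ltl" | LUntil "'a ltl" "'a ltl" | LF "'a ltl" | LG "'a ltl"

fun ltl_sat :: "(nat \<Rightarrow> 'a set) \<Rightarrow> nat \<Rightarrow> 'a ltl \<Rightarrow> bool" where
  "ltl_sat w i LTrue = True"
| "ltl_sat w i (LAtom a) = (a \<in> w i)"
| "ltl_sat w i (LNot p) = (\<not> ltl_sat w i p)"
| "ltl_sat w i (LAnd p q) = (ltl_sat w i p \<and> ltl_sat w i q)"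
| "ltl_sat w i (LNext p) = ltl_sat w (i + 1) p"
| "ltl_sat w i (LUntil p q) =
     (\<exists>j. i \<le> j \<and> ltl_sat w j q \<and> (\<forall>k. i \<le> k \<and> k < j \<longrightarrow> ltl_sat w k p))"
| "ltl_sat w i (LF p) = (\<exists>j. i \<le> j \<and> ltl_sat w j p)"
| "ltl_sat w i (LG p) = (\<forall>j. i \<le> j \<longrightarrow> ltl_sat w j p)"

definition ltl_models :: "(nat \<Rightarrow> 'a set) \<Rightarrow> 'a ltl \<Rightarrow> bool" where
  "ltl_models w p = ltl_sat w 0 p"

definition LImp :: "'a ltl \<Rightarrow> 'a ltl \<Rightarrow> 'a ltl" where
  "LImp p q = LNot (LAnd p (LNot q))"

fun bform_to_ltl :: "'a bform \<Rightarrow> 'a ltl" where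
  "bform_to_ltl BTrue = LTrue"
| "bform_to_ltl (BAtom a) = LAtom a"
| "bform_to_ltl (BNot b) = LNot (bform_to_ltl b)"
| "bform_to_ltl (BAnd b1 b2) = LAnd (bform_to_ltl b1) (bform_to_ltl b2)"

fun transl :: "'a \<Rightarrow> 'a ltlf \<Rightarrow> 'a ltl" where
  "transl alive (FAtom a) = LAtom a"
| "transl alive (FNot p) = LNot (transl alive p)"
| "transl alive (FAnd p q) = LAnd (transl alive p) (transl alive q)"
| "transl alive (FNext p) = LNext (LAnd (LAtom alive) (transl alive p))"
| "transl alive (FUntil p q) = LUntil (transl alive p) (LAnd (LAtom alive) (transl alive q))"

definition psi :: "'a \<Rightarrow> 'a ltlf \<Rightarrow> 'a ltl" where
  "psi alive \<phi> = LAnd (transl alive \<phi>)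
      (LAnd (LAtom alive) (LUntil (LAtom alive) (LG (LNot (LAtom alive)))))"

text \<open>Strategies map nonempty input histories (lists X_0,...,X_k) to output letters.\<close>

definition alpha_fair_realizable ::
  "'a set \<Rightarrow> 'a set \<Rightarrow> 'a bform \<Rightarrow> 'a ltlf \<Rightarrow> bool" where
  "alpha_fair_realizable X Y \<alpha> \<phi> =
    (\<exists>g :: 'a set list \<Rightarrow> 'a set. (\<forall>h. g h \<subseteq> Y) \<and>
       (\<forall>lam :: nat \<Rightarrow> 'a set. (\<forall>j. lam j \<subseteq> X) \<longrightarrow> infinite {j. bsat (lam j) \<alpha>} \<longrightarrow>
          (\<exists>k. ltlf_models (map (\<lambda>j. lam j \<union> g (map lam [0..<Suc j])) [0..<Suc k]) \<phi>)))"

definition ltl_realizable :: "'a set \<Rightarrow> 'a set \<Rightarrow> 'a ltl \<Rightarrow> bool" where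
  "ltl_realizable X Y' \<Psi> =
    (\<exists>f :: 'a set list \<Rightarrow> 'a set. (\<forall>h. f h \<subseteq> Y') \<and>
       (\<forall>lam :: nat \<Rightarrow> 'a set. (\<forall>j. lam j \<subseteq> X) \<longrightarrow>
          ltl_models (\<lambda>j. lam j \<union> f (map lam [0..<Suc j])) \<Psi>))"

end

theory Submission
  imports Defs "HOL-Library.Infinite_Set"
begin

text \<open>
  The fresh output alive marks the finite prefix that is to be read as an LTLf trace:
  psi forces alive to hold on a nonempty prefix and never afterwards, and on such a trace
  t(phi) evaluates exactly like phi on that prefix. A fair LTLf strategy becomes an LTL
  strategy by keeping alive up to the first prefix that satisfies phi; conversely, an LTL strategy yields an LTLf strategy by forgetting alive,
  and the prefix on which alive holds is the required witness.
\<close>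

lemma ltl_models_LImp: "ltl_models w (LImp p q) \<longleftrightarrow> (ltl_models w p \<longrightarrow> ltl_models w q)"
  by (simp add: ltl_models_def LImp_def)

lemma ltl_sat_GF_iff: "ltl_sat w i (LG (LF p)) \<longleftrightarrow> infinite {j. ltl_sat w j p}"
  unfolding infinite_nat_iff_unbounded_le by (auto intro: le_trans) (meson le_trans nat_le_linear)

lemma ltl_sat_bform_to_ltl_iff:
  assumes "\<And>a. a \<in> batoms b \<Longrightarrow> a \<in> w j \<longleftrightarrow> a \<in> T"
  shows "ltl_sat w j (bform_to_ltl b) \<longleftrightarrow> bsat T b"
  using assms by (induction b) auto

lemma ltl_sat_transl_iff:
  assumes "length \<rho> = n"
    and agree: "\<And>i a. i < n \<Longrightarrow> a \<in> fatoms \<phi> \<Longrightarrow> a \<in> \<rho> ! i \<longleftrightarrow> a \<in> w i"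
    and alive: "\<And>i. alive \<in> w i \<longleftrightarrow> i < n"
    and "i < n"
  shows "ltl_sat w i (transl alive \<phi>) \<longleftrightarrow> ltlf_sat \<rho> i \<phi>"
  using agree \<open>i < n\<close>
proof (induction \<phi> arbitrary: i)
  case (FUntil p q)
  have ih: "ltl_sat w k (transl alive p) \<longleftrightarrow> ltlf_sat \<rho> k p"
    "ltl_sat w k (transl alive q) \<longleftrightarrow> ltlf_sat \<rho> k q" if "k < n" for k
    using FUntil that by simp_all
  show ?case
  proof
    assume "ltl_sat w i (transl alive (FUntil p q))"
    then obtain j where "i \<le> j" "j < n" "ltl_sat w j (transl alive q)"
      "\<forall>k. i \<le> k \<and> k < j \<longrightarrow> ltl_sat w k (transl alive p)"
      using alive by auto
    then show "ltlf_sat \<rho> i (FUntil p q)"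
      using ih \<open>length \<rho> = n\<close> by auto
  next
    assume "ltlf_sat \<rho> i (FUntil p q)"
    then obtain j where "i \<le> j" "j < n" "ltlf_sat \<rho> j q"
      "\<forall>k. i \<le> k \<and> k < j \<longrightarrow> ltlf_sat \<rho> k p"
      using \<open>length \<rho> = n\<close> by auto
    then show "ltl_sat w i (transl alive (FUntil p q))"
      using ih alive by (auto intro!: exI[of _ j])
  qed
qed (use assms in auto)

lemma ltl_sat_transl_prefix_iff:
  assumes "alive \<notin> fatoms \<phi>" "\<forall>i. alive \<in> w i \<longleftrightarrow> i \<le> k"
  shows "ltl_sat w 0 (transl alive \<phi>) \<longleftrightarrow> ltlf_models (map (\<lambda>i. w i - {alive}) [0..<Suc k]) \<phi>"
  unfolding ltlf_models_def
proof (rule ltl_sat_transl_iff[where n = "Suc k"])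
  show "a \<in> map (\<lambda>i. w i - {alive}) [0..<Suc k] ! i \<longleftrightarrow> a \<in> w i"
    if "i < Suc k" "a \<in> fatoms \<phi>" for i a
    using that assms(1) by (auto simp del: upt_Suc)
qed (use assms(2) in \<open>simp_all add: less_Suc_eq_le del: upt_Suc\<close>)

lemma ltl_sat_holds_until_never_iff:
  "a \<in> w 0 \<and> ltl_sat w 0 (LUntil (LAtom a) (LG (LNot (LAtom a))))
      \<longleftrightarrow> (\<exists>k. \<forall>i. a \<in> w i \<longleftrightarrow> i \<le> k)" (is "?l \<longleftrightarrow> (\<exists>k. ?a k)")
proof
  assume "\<exists>k. ?a k"
  then obtain k where "?a k" ..
  then show ?l
    unfolding ltl_sat.simps by (intro conjI exI[of _ "Suc k"]) (simp_all add: less_Suc_eq_le not_less_eq_eq)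
next
  assume ?l
  then obtain j where "a \<in> w 0" "\<forall>i\<ge>j. a \<notin> w i" "\<forall>i<j. a \<in> w i"
    by auto
  then have "?a (j - 1)"
    by (metis One_nat_def Suc_pred le_simps(2) linorder_not_le not_gr_zero)
  then show "\<exists>k. ?a k" ..
qed

lemma ltl_models_psi_iff:
  assumes "alive \<notin> fatoms \<phi>"
  shows "ltl_models w (psi alive \<phi>) \<longleftrightarrow>
    (\<exists>k. (\<forall>i. alive \<in> w i \<longleftrightarrow> i \<le> k) \<and> ltlf_models (map (\<lambda>i. w i - {alive}) [0..<Suc k]) \<phi>)"
proof -
  have "ltl_models w (psi alive \<phi>) \<longleftrightarrow>
      ltl_sat w 0 (transl alive \<phi>) \<and> (\<exists>k. \<forall>i. alive \<in> w i \<longleftrightarrow> i \<le> k)"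
    using ltl_sat_holds_until_never_iff[of alive w] by (simp add: ltl_models_def psi_def)
  then show ?thesis
    using ltl_sat_transl_prefix_iff[OF assms, of w] by auto
qed

definition run :: "('a set list \<Rightarrow> 'a set) \<Rightarrow> (nat \<Rightarrow> 'a set) \<Rightarrow> nat \<Rightarrow> 'a set" where
  "run f lam j = lam j \<union> f (map lam [0..<Suc j])"

definition play :: "('a set list \<Rightarrow> 'a set) \<Rightarrow> 'a set list \<Rightarrow> 'a set list" where
  "play g h = map (\<lambda>i. h ! i \<union> g (take (Suc i) h)) [0..<length h]"

lemma play_map_upt: "play g (map lam [0..<n]) = map (run g lam) [0..<n]"
  by (simp add: play_def run_def take_map take_upt)

lemma run_Diff_singleton: "x \<notin> lam j \<Longrightarrow> run f lam j - {x} = run (\<lambda>h. f h - {x}) lam j"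
  by (auto simp: run_def)

lemma ltl_models_GF_run_iff:
  assumes "\<And>h. f h \<inter> batoms \<alpha> = {}"
  shows "ltl_models (run f lam) (LG (LF (bform_to_ltl \<alpha>))) \<longleftrightarrow> infinite {j. bsat (lam j) \<alpha>}"
proof -
  have "ltl_sat (run f lam) j (bform_to_ltl \<alpha>) \<longleftrightarrow> bsat (lam j) \<alpha>" for j
    by (rule ltl_sat_bform_to_ltl_iff) (use assms in \<open>auto simp: run_def\<close>)
  then show ?thesis
    unfolding ltl_models_def ltl_sat_GF_iff by simp
qed

text \<open>Along a run, alive is switched off from the step after the first prefix of g's play that
  satisfies phi; the fairness of the inputs is what guarantees that this happens.\<close>
definition keep_alive :: "('a set list \<Rightarrow> 'a set) \<Rightarrow> 'a \<Rightarrow> 'a ltlf \<Rightarrow> 'a set list \<Rightarrow> 'a set" where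
  "keep_alive g alive \<phi> h = g h \<union>
     (if \<exists>k. Suc k < length h \<and> ltlf_models (play g (take (Suc k) h)) \<phi> then {} else {alive})"

lemma alive_in_run_keep_alive_iff:
  assumes "alive \<notin> lam j" "\<And>h. alive \<notin> g h"
  shows "alive \<in> run (keep_alive g alive \<phi>) lam j \<longleftrightarrow>
    (\<forall>k<j. \<not> ltlf_models (map (run g lam) [0..<Suc k]) \<phi>)"
proof -
  have "play g (take (Suc k) (map lam [0..<Suc j])) = map (run g lam) [0..<Suc k]" if "k < j" for k
    using that by (simp add: take_map take_upt play_map_upt del: upt_Suc)
  then show ?thesis
    using assms by (auto simp: run_def keep_alive_def simp del: upt_Suc)
qed

lemma alpha_fair_realizable_imp_ltl_realizable:
  assumes "X \<inter> Y = {}" "alive \<notin> X \<union> Y" "batoms \<alpha> \<subseteq> X" "alive \<notin> fatoms \<phi>"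
    and "alpha_fair_realizable X Y \<alpha> \<phi>"
  shows "ltl_realizable X (Y \<union> {alive}) (LImp (LG (LF (bform_to_ltl \<alpha>))) (psi alive \<phi>))"
proof -
  obtain g where gY: "\<And>h. g h \<subseteq> Y" and wins: "\<And>lam. \<forall>j. lam j \<subseteq> X \<Longrightarrow>
      infinite {j. bsat (lam j) \<alpha>} \<Longrightarrow> \<exists>k. ltlf_models (map (run g lam) [0..<Suc k]) \<phi>"
    using assms(5) unfolding alpha_fair_realizable_def run_def[symmetric] by blast
  define f where "f = keep_alive g alive \<phi>"
  have fY: "f h \<subseteq> Y \<union> {alive}" for h
    using gY by (auto simp: f_def keep_alive_def)
  have psi_holds: "ltl_models (run f lam) (psi alive \<phi>)"
    if lamX: "\<forall>j. lam j \<subseteq> X" and fair: "infinite {j. bsat (lam j) \<alpha>}" for lam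
  proof -
    let ?sat = "\<lambda>k. ltlf_models (map (run g lam) [0..<Suc k]) \<phi>"
    define k0 where "k0 = (LEAST k. ?sat k)"
    have sat: "?sat k0"
      using wins[OF lamX fair] unfolding k0_def by (rule LeastI_ex)
    have unsat: "\<not> ?sat k" if "k < k0" for k
      using that unfolding k0_def by (rule not_less_Least)
    have no_alive: "alive \<notin> lam j" "alive \<notin> g h" for j h
      using lamX gY assms(2) by blast+
    have alive_iff: "alive \<in> run f lam i \<longleftrightarrow> i \<le> k0" for i
      unfolding f_def alive_in_run_keep_alive_iff[OF no_alive]
      using sat unsat by (meson le_less_trans linorder_not_le)
    have "(\<lambda>h. f h - {alive}) = g"
      using no_alive by (auto simp: f_def keep_alive_def fun_eq_iff)
    then have "(\<lambda>i. run f lam i - {alive}) = run g lam"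
      using no_alive by (simp add: run_Diff_singleton fun_eq_iff)
    then show ?thesis
      unfolding ltl_models_psi_iff[OF assms(4)] using alive_iff sat by auto
  qed
  have disj: "f h \<inter> batoms \<alpha> = {}" for h
    using fY assms(1-3) by blast
  have "ltl_models (run f lam) (LImp (LG (LF (bform_to_ltl \<alpha>))) (psi alive \<phi>))"
    if "\<forall>j. lam j \<subseteq> X" for lam
    unfolding ltl_models_LImp ltl_models_GF_run_iff[OF disj] using psi_holds[OF that] by blast
  with fY show ?thesis
    unfolding ltl_realizable_def run_def[symmetric] by blast
qed

lemma ltl_realizable_imp_alpha_fair_realizable:
  assumes "X \<inter> Y = {}" "alive \<notin> X" "batoms \<alpha> \<subseteq> X" "alive \<notin> fatoms \<phi>"
    and "ltl_realizable X (Y \<union> {alive}) (LImp (LG (LF (bform_to_ltl \<alpha>))) (psi alive \<phi>))"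
  shows "alpha_fair_realizable X Y \<alpha> \<phi>"
proof -
  obtain f where fY: "\<And>h. f h \<subseteq> Y \<union> {alive}" and wins: "\<And>lam. \<forall>j. lam j \<subseteq> X \<Longrightarrow>
      ltl_models (run f lam) (LImp (LG (LF (bform_to_ltl \<alpha>))) (psi alive \<phi>))"
    using assms(5) unfolding ltl_realizable_def run_def[symmetric] by blast
  define g where "g h = f h - {alive}" for h
  have "\<exists>k. ltlf_models (map (run g lam) [0..<Suc k]) \<phi>"
    if lamX: "\<forall>j. lam j \<subseteq> X" and fair: "infinite {j. bsat (lam j) \<alpha>}" for lam
  proof -
    have disj: "f h \<inter> batoms \<alpha> = {}" for h
      using fY assms(1-3) by blast
    have "ltl_models (run f lam) (psi alive \<phi>)"
      using wins[OF lamX] fair unfolding ltl_models_LImp ltl_models_GF_run_iff[OF disj] by blast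
    moreover have "(\<lambda>i. run f lam i - {alive}) = run g lam"
      using lamX assms(2) by (auto simp: run_def g_def fun_eq_iff simp del: upt_Suc)
    ultimately show ?thesis
      unfolding ltl_models_psi_iff[OF assms(4)] by auto
  qed
  moreover have "g h \<subseteq> Y" for h
    using fY by (auto simp: g_def)
  ultimately show ?thesis
    unfolding alpha_fair_realizable_def run_def[symmetric] by blast
qed

theorem mainTheorem8:
  fixes X Y :: "'a set" and alive :: 'a and \<alpha> :: "'a bform" and \<phi> :: "'a ltlf"
  assumes "finite X" and "finite Y" and "X \<inter> Y = {}"
    and "alive \<notin> X \<union> Y"
    and "batoms \<alpha> \<subseteq> X"
    and "fatoms \<phi> \<subseteq> X \<union> Y"
  shows "alpha_fair_realizable X Y \<alpha> \<phi> \<longleftrightarrow>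
         ltl_realizable X (Y \<union> {alive})
           (LImp (LG (LF (bform_to_ltl \<alpha>))) (psi alive \<phi>))"
proof -
  have "alive \<notin> X" "alive \<notin> fatoms \<phi>"
    using assms(4,6) by blast+
  then show ?thesis
    using alpha_fair_realizable_imp_ltl_realizable[OF assms(3-5)]
      ltl_realizable_imp_alpha_fair_realizable[OF assms(3) _ assms(5)] by blast
qed

end
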